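(* Let $\Phi\in\mathbb{R}^{|\mathcal S|\times d}$ be a feature matrix, $H\ge1$, $\theta_0\in\mathbb{R}^d$, and deterministic stepsizes $\gamma_k\in(0,1]$ with $\sum_k\gamma_k=\infty$, $\sum_k\gamma_k^2<\infty$. Consider iterates: for $k\ge0$, let $\mu_{k+1}$ satisfy $T_{\mu_{k+1}}T^{H-1}\Phi\theta_k=T^H\Phi\theta_k$, let $\theta^{\mu_{k+1}}\in\mathbb{R}^d$ be a random vector (an estimate obtained from a trajectory of $\mu_{k+1}$), and set $\theta_{k+1}=(1-\gamma_k)\theta_k+\gamma_k\theta^{\mu_{k+1}}$. Let $\mathcal F_k$ be the filtration of the history up to iteration $k$ (so $\theta_k$ and $\mu_{k+1}$ are $\mathcal F_k$-measurable), and assume $\|\Phi\theta^{\mu_{k+1}}\|_\infty$ is bounded almost surely by a constant independent of $k$. Suppose there are constants $\delta_{app}>0$ and $\kappa>0$ with $$\beta:=\alpha^{H-1}+\kappa\frac{2\alpha^{H-1}}{1-\alpha}<1$$ and, for all $k$, almost surely, $$\big\|E[\Phi\theta^{\mu_{k+1}}\mid\mathcal F_k]-T^{H-1}\Phi\theta_k\big\|_\infty\le\kappa\big\|T^{H-1}\Phi\theta_k-J^{\mu_{k+1}}\big\|_\infty+\delta_{app}.$$ Then almost surely $$\limsup_{k\to\infty}\|\Phi\theta_k-J^*\|_\infty\le\frac{\delta_{app}}{1-\beta},\qquad \limsup_{k\to\infty}\|J^{\mu_k}-J^*\|_\infty\le\frac{2\alpha^{H-1}}{1-\alpha}\cdo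t\frac{\delta_{app}}{1-\beta}.$$
   Context: Finite Markov decision process with finite state space $\mathcal S$, finite action set $\mathcal A$, transition probabilities $P_{ij}(u)$, costs $g(i,u)\in[0,1]$, discount $\alpha\in(0,1)$. For a policy $\mu$, $T_\mu J=g_\mu+\alpha P_\mu J$ and $J^\mu$ is its fixed point; $(TJ)(i)=\min_u\big[g(i,u)+\alpha\sum_jP_{ij}(u)J(j)\big]$ with fixed point $J^*$. Powers denote compositions. The rows of $\Phi$ are feature vectors $\phi(i)^\top$, $i\in\mathcal S$. *)

theory Defs
  imports "HOL-Probability.Probability"
begin

text \<open>States: finite type 's; actions: finite type 'a
  (every action admissible in every state).\<close>

definition Tmu :: "('a \<Rightarrow> 's::finite \<Rightarrow> 's \<Rightarrow> real) \<Rightarrow> ('s \<Rightarrow> 'a \<Rightarrow> real) \<Rightarrow> real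
    \<Rightarrow> ('s \<Rightarrow> 'a) \<Rightarrow> ('s \<Rightarrow> real) \<Rightarrow> ('s \<Rightarrow> real)" where
  "Tmu P g \<alpha> \<mu> J = (\<lambda>i. g i (\<mu> i) + \<alpha> * (\<Sum>j\<in>UNIV. P (\<mu> i) i j * J j))"

definition Tbell :: "('a::finite \<Rightarrow> 's::finite \<Rightarrow> 's \<Rightarrow> real) \<Rightarrow> ('s \<Rightarrow> 'a \<Rightarrow> real) \<Rightarrow> real
    \<Rightarrow> ('s \<Rightarrow> real) \<Rightarrow> ('s \<Rightarrow> real)" where
  "Tbell P g \<alpha> J = (\<lambda>i. Min (range (\<lambda>u. g i u + \<alpha> * (\<Sum>j\<in>UNIV. P u i j * J j))))"

definition Jpol :: "('a \<Rightarrow> 's::finite \<Rightarrow> 's \<Rightarrow> real) \<Rightarrow> ('s \<Rightarrow> 'a \<Rightarrow> real) \<Rightarrow> real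
    \<Rightarrow> ('s \<Rightarrow> 'a) \<Rightarrow> ('s \<Rightarrow> real)" where
  "Jpol P g \<alpha> \<mu> = (THE J. Tmu P g \<alpha> \<mu> J = J)"

definition Jstar :: "('a::finite \<Rightarrow> 's::finite \<Rightarrow> 's \<Rightarrow> real) \<Rightarrow> ('s \<Rightarrow> 'a \<Rightarrow> real) \<Rightarrow> real
    \<Rightarrow> ('s \<Rightarrow> real)" where
  "Jstar P g \<alpha> = (THE J. Tbell P g \<alpha> J = J)"

definition norm_inf :: "('s::finite \<Rightarrow> real) \<Rightarrow> real" where
  "norm_inf J = Max (range (\<lambda>i. \<bar>J i\<bar>))"

text \<open>Feature matrix: row i is the feature vector phi i; (Phi theta)(i) = phi(i)^T theta.\<close>
definition featmul :: "('s \<Rightarrow> real ^ 'd) \<Rightarrow> real ^ 'd \<Rightarrow> ('s \<Rightarrow> real)" where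
  "featmul \<phi> \<theta> = (\<lambda>i. \<phi> i \<bullet> \<theta>)"

end

theory Submission
  imports Defs
begin

text \<open>Let \<open>e k\<close> be the sup-norm distance from \<open>\<Phi> \<theta> k\<close> to \<open>J\<^sup>*\<close> and \<open>m k\<close> the conditional mean
  of the \<open>k\<close>-th estimate. Because \<open>T\<close> and every \<open>T\<^sub>\<mu>\<close> are \<open>\<alpha>\<close>-contractions, the \<open>H\<close>-step lookahead
  policy is within \<open>2 \<alpha>\<^sup>H / (1 - \<alpha>) * e k\<close> of optimal, so the bias assumption puts \<open>m k\<close> within
  \<open>\<beta> * e k + \<delta>\<close> of \<open>J\<^sup>*\<close>. The iterates are therefore an averaging towards a target that
  contracts towards \<open>J\<^sup>*\<close> up to \<open>\<delta>\<close>, perturbed by bounded martingale differences weighted by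
  \<open>\<gamma> k\<close>. As \<open>\<Sum> \<gamma> k\<^sup>2 < \<infinity>\<close>, Kolmogorov's maximal inequality makes the noise series converge
  almost surely; on that event, subtracting its remaining tail leaves a deterministic recursion
  whose limsup is at most \<open>\<delta> / (1 - \<beta>)\<close>, and the policy bound transfers this to \<open>J\<^sup>\<mu>\<close>.\<close>

section \<open>The sup norm\<close>

lemma abs_le_norm_inf: "\<bar>J i\<bar> \<le> norm_inf (J :: 's::finite \<Rightarrow> real)"
  unfolding norm_inf_def by (rule Max_ge) auto

lemma norm_inf_leI: "(\<And>i. \<bar>J i\<bar> \<le> c) \<Longrightarrow> norm_inf (J :: 's::finite \<Rightarrow> real) \<le> c"
  unfolding norm_inf_def by (subst Max_le_iff) auto

lemma norm_inf_nonneg: "0 \<le> norm_inf (J :: 's::finite \<Rightarrow> real)"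
  using abs_le_norm_inf[of J] abs_ge_zero order_trans by blast

lemma norm_inf_add_le:
  "norm_inf (\<lambda>i. (x :: 's::finite \<Rightarrow> real) i + y i) \<le> norm_inf x + norm_inf y"
proof (rule norm_inf_leI)
  fix i
  show "\<bar>x i + y i\<bar> \<le> norm_inf x + norm_inf y"
    using abs_triangle_ineq[of "x i" "y i"] abs_le_norm_inf[of x i] abs_le_norm_inf[of y i] by simp
qed

lemma norm_inf_uminus: "norm_inf (\<lambda>i. - (x :: 's::finite \<Rightarrow> real) i) = norm_inf x"
  unfolding norm_inf_def by simp

lemma norm_inf_triangle:
  "norm_inf (\<lambda>i. (x :: 's::finite \<Rightarrow> real) i - z i)
     \<le> norm_inf (\<lambda>i. x i - y i) + norm_inf (\<lambda>i. y i - z i)"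
  using norm_inf_add_le[of "\<lambda>i. x i - y i" "\<lambda>i. y i - z i"] by simp

lemma norm_inf_commute:
  "norm_inf (\<lambda>i. (x :: 's::finite \<Rightarrow> real) i - y i) = norm_inf (\<lambda>i. y i - x i)"
  unfolding norm_inf_def by (simp add: abs_minus_commute)

lemma norm_inf_diff_eq_0D:
  assumes "norm_inf (\<lambda>i. (x :: 's::finite \<Rightarrow> real) i - y i) = 0"
  shows "x = y"
proof
  fix i show "x i = y i" using abs_le_norm_inf[of "\<lambda>i. x i - y i" i] assms by simp
qed

lemma tendsto_norm_inf_0:
  assumes "\<And>i. ((\<lambda>k. f k i) \<longlongrightarrow> 0) F"
  shows "((\<lambda>k. norm_inf (f k :: 's::finite \<Rightarrow> real)) \<longlongrightarrow> 0) F"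
proof (rule Lim_null_comparison)
  show "((\<lambda>k. \<Sum>i\<in>UNIV. \<bar>f k i\<bar>) \<longlongrightarrow> 0) F"
    by (rule tendsto_null_sum) (simp add: tendsto_rabs_zero assms)
  show "\<forall>\<^sub>F k in F. norm (norm_inf (f k)) \<le> (\<Sum>i\<in>UNIV. \<bar>f k i\<bar>)"
    by (intro always_eventually allI)
      (auto simp: norm_inf_nonneg intro!: norm_inf_leI member_le_sum)
qed

section \<open>Sup-norm contractions and lookahead policies\<close>

definition sup_contraction :: "real \<Rightarrow> (('s::finite \<Rightarrow> real) \<Rightarrow> ('s \<Rightarrow> real)) \<Rightarrow> bool" where
  "sup_contraction \<alpha> T \<longleftrightarrow>
     (\<forall>x y. norm_inf (\<lambda>i. T x i - T y i) \<le> \<alpha> * norm_inf (\<lambda>i. x i - y i))"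

lemma sup_contractionD:
  "sup_contraction \<alpha> T \<Longrightarrow> norm_inf (\<lambda>i. T x i - T y i) \<le> \<alpha> * norm_inf (\<lambda>i. x i - y i)"
  unfolding sup_contraction_def by blast

lemma abs_sum_stochastic_diff_le:
  assumes "\<And>j. p j \<ge> 0" and "(\<Sum>j\<in>UNIV. p j) = 1"
  shows "\<bar>(\<Sum>j\<in>UNIV. p j * x j) - (\<Sum>j\<in>UNIV. p j * y j)\<bar>
           \<le> norm_inf (\<lambda>j. (x :: 's::finite \<Rightarrow> real) j - y j)"
proof -
  have "\<bar>(\<Sum>j\<in>UNIV. p j * x j) - (\<Sum>j\<in>UNIV. p j * y j)\<bar> = \<bar>\<Sum>j\<in>UNIV. p j * (x j - y j)\<bar>"
    by (simp add: sum_subtractf right_diff_distrib)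
  also have "\<dots> \<le> (\<Sum>j\<in>UNIV. \<bar>p j * (x j - y j)\<bar>)" by (rule sum_abs)
  also have "\<dots> \<le> (\<Sum>j\<in>UNIV. p j * norm_inf (\<lambda>j. x j - y j))"
    using abs_le_norm_inf[of "\<lambda>j. x j - y j"]
    by (intro sum_mono) (simp add: abs_mult assms(1) mult_left_mono)
  also have "\<dots> = norm_inf (\<lambda>j. x j - y j)" by (simp add: sum_distrib_right[symmetric] assms(2))
  finally show ?thesis .
qed

lemma abs_Min_range_diff_le:
  fixes f h :: "'a::finite \<Rightarrow> real"
  assumes "\<And>u. \<bar>f u - h u\<bar> \<le> c"
  shows "\<bar>Min (range f) - Min (range h)\<bar> \<le> c"
proof -
  have "Min (range f) \<in> range f" "Min (range h) \<in> range h" by (simp_all add: Min_in)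
  then obtain u v where u: "f u = Min (range f)" and v: "h v = Min (range h)" by (metis imageE)
  have "Min (range f) \<le> f v" "Min (range h) \<le> h u" by simp_all
  then show ?thesis using assms[of u] assms[of v] u v by linarith
qed

lemma sup_contraction_funpow:
  assumes T: "sup_contraction \<alpha> T" and "0 \<le> \<alpha>"
  shows "sup_contraction (\<alpha> ^ n) (T ^^ n)"
  unfolding sup_contraction_def
proof (induction n)
  case (Suc n)
  show ?case
  proof (intro allI)
    fix x y
    have "norm_inf (\<lambda>i. (T ^^ Suc n) x i - (T ^^ Suc n) y i)
        \<le> \<alpha> * norm_inf (\<lambda>i. (T ^^ n) x i - (T ^^ n) y i)"
      using sup_contractionD[OF T] by simp
    also have "\<dots> \<le> \<alpha> ^ Suc n * norm_inf (\<lambda>i. x i - y i)"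
      using Suc.IH mult_left_mono[OF _ \<open>0 \<le> \<alpha>\<close>] by (simp add: mult.assoc)
    finally show "norm_inf (\<lambda>i. (T ^^ Suc n) x i - (T ^^ Suc n) y i)
        \<le> \<alpha> ^ Suc n * norm_inf (\<lambda>i. x i - y i)" .
  qed
qed simp

lemma sup_contraction_iterates_convergent:
  assumes T: "sup_contraction \<alpha> T" and "0 \<le> \<alpha>" "\<alpha> < 1"
  shows "convergent (\<lambda>n. (T ^^ n) x i)"
proof -
  define D where "D = norm_inf (\<lambda>i. T x i - x i)"
  have step: "norm ((T ^^ Suc n) x i - (T ^^ n) x i) \<le> \<alpha> ^ n * D" for n
    using abs_le_norm_inf[of "\<lambda>i. (T ^^ n) (T x) i - (T ^^ n) x i" i]
      sup_contractionD[OF sup_contraction_funpow[OF assms(1,2)], of n "T x" x]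
    by (simp add: D_def funpow_swap1)
  have "summable (\<lambda>n. \<alpha> ^ n * D)" using assms by (simp add: summable_mult2)
  then have "summable (\<lambda>n. (T ^^ Suc n) x i - (T ^^ n) x i)"
    by (rule summable_comparison_test'[where N = 0]) (use step in auto)
  then have "convergent (\<lambda>n. (T ^^ n) x i - (T ^^ 0) x i)"
    unfolding summable_iff_convergent sum_lessThan_telescope[of "\<lambda>n. (T ^^ n) x i"] .
  then have "convergent (\<lambda>n. ((T ^^ n) x i - (T ^^ 0) x i) + (T ^^ 0) x i)"
    by (intro convergent_add convergent_const)
  then show ?thesis by simp
qed

lemma sup_contraction_ex1_fixpoint:
  assumes T: "sup_contraction \<alpha> T" and "0 \<le> \<alpha>" "\<alpha> < 1"
  shows "\<exists>!J. T J = J"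
proof
  define x where "x n = (T ^^ n) (\<lambda>_. 0)" for n
  define L where "L i = lim (\<lambda>n. x n i)" for i
  have L: "(\<lambda>n. x n i) \<longlonglongrightarrow> L i" for i
    using sup_contraction_iterates_convergent[OF assms]
    by (simp add: x_def L_def convergent_LIMSEQ_iff)
  have "(\<lambda>n. norm_inf (\<lambda>i. x n i - L i)) \<longlonglongrightarrow> 0"
    by (intro tendsto_norm_inf_0) (use L LIM_zero in blast)
  then have "(\<lambda>n. \<alpha> * norm_inf (\<lambda>i. x n i - L i)) \<longlonglongrightarrow> 0"
    by (rule tendsto_mult_right_zero)
  moreover have "\<bar>x (Suc n) i - T L i\<bar> \<le> \<alpha> * norm_inf (\<lambda>i. x n i - L i)" for n i
    using abs_le_norm_inf[of "\<lambda>i. x (Suc n) i - T L i" i] sup_contractionD[OF T, of "x n" L]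
    by (simp add: x_def)
  ultimately have "(\<lambda>n. x (Suc n) i - T L i) \<longlonglongrightarrow> 0" for i
    using Lim_null_comparison[of "\<lambda>n. x (Suc n) i - T L i" "\<lambda>n. \<alpha> * norm_inf (\<lambda>i. x n i - L i)"]
    by (simp add: always_eventually)
  then have "(\<lambda>n. x (Suc n) i) \<longlonglongrightarrow> T L i" for i
    by (simp add: LIM_zero_iff)
  then show "T L = L"
    using L LIMSEQ_Suc LIMSEQ_unique by blast
  fix J assume "T J = J"
  then have "norm_inf (\<lambda>i. J i - L i) \<le> \<alpha> * norm_inf (\<lambda>i. J i - L i)"
    using sup_contractionD[OF T, of J L] \<open>T L = L\<close> by simp
  then have "(1 - \<alpha>) * norm_inf (\<lambda>i. J i - L i) \<le> 0" by (simp add: algebra_simps)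
  then have "norm_inf (\<lambda>i. J i - L i) = 0"
    using assms(3) norm_inf_nonneg[of "\<lambda>i. J i - L i"] by (simp add: mult_le_0_iff)
  then show "J = L" by (rule norm_inf_diff_eq_0D)
qed

locale discounted_mdp =
  fixes P :: "'a::finite \<Rightarrow> 's::finite \<Rightarrow> 's \<Rightarrow> real"
    and g :: "'s \<Rightarrow> 'a \<Rightarrow> real"
    and \<alpha> :: real
  assumes P_nonneg: "\<And>u i j. P u i j \<ge> 0"
    and P_stoch: "\<And>u i. (\<Sum>j\<in>UNIV. P u i j) = 1"
    and discount_nonneg: "0 \<le> \<alpha>"
    and discount_less_1: "\<alpha> < 1"
begin

lemma abs_discounted_expectation_diff_le:
  "\<bar>\<alpha> * (\<Sum>j\<in>UNIV. P u i j * x j) - \<alpha> * (\<Sum>j\<in>UNIV. P u i j * y j)\<bar>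
     \<le> \<alpha> * norm_inf (\<lambda>j. x j - y j)"
  using abs_sum_stochastic_diff_le[of "P u i" x y, OF P_nonneg P_stoch] discount_nonneg
  by (simp add: right_diff_distrib[symmetric] abs_mult mult_left_mono)

lemma sup_contraction_Tbell: "sup_contraction \<alpha> (Tbell P g \<alpha>)"
  unfolding sup_contraction_def Tbell_def
  by (auto intro!: norm_inf_leI abs_Min_range_diff_le simp: abs_discounted_expectation_diff_le)

lemma sup_contraction_Tmu: "sup_contraction \<alpha> (Tmu P g \<alpha> \<mu>)"
  unfolding sup_contraction_def Tmu_def
  by (auto intro!: norm_inf_leI simp: abs_discounted_expectation_diff_le)

abbreviation "Tb \<equiv> Tbell P g \<alpha>"
abbreviation "Js \<equiv> Jstar P g \<alpha>"

lemma Jstar_fixpoint: "Tb Js = Js"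
  unfolding Jstar_def
  by (rule theI'[OF sup_contraction_ex1_fixpoint[OF sup_contraction_Tbell discount_nonneg discount_less_1]])

lemma Jpol_fixpoint: "Tmu P g \<alpha> \<mu> (Jpol P g \<alpha> \<mu>) = Jpol P g \<alpha> \<mu>"
  unfolding Jpol_def
  by (rule theI'[OF sup_contraction_ex1_fixpoint[OF sup_contraction_Tmu discount_nonneg discount_less_1]])

lemma norm_inf_funpow_Tbell_Jstar:
  "norm_inf (\<lambda>i. (Tb ^^ n) x i - Js i) \<le> \<alpha> ^ n * norm_inf (\<lambda>i. x i - Js i)"
proof -
  have "(Tb ^^ n) Js = Js"
    by (induction n) (simp_all add: Jstar_fixpoint)
  then show ?thesis
    using sup_contractionD[OF sup_contraction_funpow[OF sup_contraction_Tbell discount_nonneg], of n x Js]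
    by simp
qed

lemma norm_inf_lookahead_policy_le:
  assumes greedy: "Tmu P g \<alpha> \<mu> ((Tb ^^ (H - 1)) x) = (Tb ^^ H) x" and "H \<ge> 1"
  shows "norm_inf (\<lambda>i. Jpol P g \<alpha> \<mu> i - Js i) \<le> 2 * \<alpha> ^ H / (1 - \<alpha>) * norm_inf (\<lambda>i. x i - Js i)"
proof -
  define J where "J = Jpol P g \<alpha> \<mu>"
  define y where "y = (Tb ^^ (H - 1)) x"
  define e where "e = norm_inf (\<lambda>i. x i - Js i)"
  define A where "A = norm_inf (\<lambda>i. J i - Js i)"
  have "\<alpha> ^ H = \<alpha> * \<alpha> ^ (H - 1)" using \<open>H \<ge> 1\<close> by (cases H) auto
  have "norm_inf (\<lambda>i. J i - y i) \<le> A + \<alpha> ^ (H - 1) * e"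
    using norm_inf_triangle[of J y Js] norm_inf_funpow_Tbell_Jstar[of "H - 1" x] norm_inf_commute[of Js y]
    by (simp add: A_def y_def e_def)
  then have "\<alpha> * norm_inf (\<lambda>i. J i - y i) \<le> \<alpha> * A + \<alpha> ^ H * e"
    using mult_left_mono[OF _ discount_nonneg] \<open>\<alpha> ^ H = \<alpha> * \<alpha> ^ (H - 1)\<close>
    by (fastforce simp: algebra_simps)
  moreover have "A \<le> norm_inf (\<lambda>i. Tmu P g \<alpha> \<mu> J i - Tmu P g \<alpha> \<mu> y i) + norm_inf (\<lambda>i. Tmu P g \<alpha> \<mu> y i - Js i)"
    using norm_inf_triangle[of J Js "Tmu P g \<alpha> \<mu> y"] Jpol_fixpoint[of \<mu>] by (simp add: A_def J_def)
  moreover have "\<dots> \<le> \<alpha> * norm_inf (\<lambda>i. J i - y i) + \<alpha> ^ H * e"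
    using sup_contractionD[OF sup_contraction_Tmu, of \<mu> J y] norm_inf_funpow_Tbell_Jstar[of H x] greedy
    by (simp add: y_def e_def)
  ultimately have "(1 - \<alpha>) * A \<le> 2 * \<alpha> ^ H * e" by (simp add: algebra_simps)
  then show ?thesis
    using discount_less_1 by (simp add: A_def J_def e_def field_simps)
qed

lemma norm_inf_lookahead_value_minus_Jpol_le:
  assumes greedy: "Tmu P g \<alpha> \<mu> ((Tb ^^ (H - 1)) x) = (Tb ^^ H) x" and "H \<ge> 1"
  shows "norm_inf (\<lambda>i. (Tb ^^ (H - 1)) x i - Jpol P g \<alpha> \<mu> i)
           \<le> 2 * \<alpha> ^ (H - 1) / (1 - \<alpha>) * norm_inf (\<lambda>i. x i - Js i)"
proof -
  define e where "e = norm_inf (\<lambda>i. x i - Js i)"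
  have "\<alpha> ^ (H - 1) + 2 * \<alpha> ^ H / (1 - \<alpha>) = \<alpha> ^ (H - 1) * (1 + \<alpha>) / (1 - \<alpha>)"
    using \<open>H \<ge> 1\<close> discount_less_1 by (cases H) (auto simp: field_simps)
  also have "\<dots> \<le> 2 * \<alpha> ^ (H - 1) / (1 - \<alpha>)"
    using mult_left_mono[of "1 + \<alpha>" 2 "\<alpha> ^ (H - 1)"] discount_nonneg discount_less_1
    by (intro divide_right_mono) (auto simp: mult.commute)
  finally have const: "\<alpha> ^ (H - 1) + 2 * \<alpha> ^ H / (1 - \<alpha>) \<le> 2 * \<alpha> ^ (H - 1) / (1 - \<alpha>)" .
  have "norm_inf (\<lambda>i. (Tb ^^ (H - 1)) x i - Jpol P g \<alpha> \<mu> i)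
      \<le> norm_inf (\<lambda>i. (Tb ^^ (H - 1)) x i - Js i) + norm_inf (\<lambda>i. Js i - Jpol P g \<alpha> \<mu> i)"
    by (rule norm_inf_triangle)
  also have "\<dots> \<le> (\<alpha> ^ (H - 1) + 2 * \<alpha> ^ H / (1 - \<alpha>)) * e"
    using norm_inf_funpow_Tbell_Jstar[of "H - 1" x] norm_inf_lookahead_policy_le[OF assms]
      norm_inf_commute[of Js "Jpol P g \<alpha> \<mu>"]
    by (simp add: e_def algebra_simps)
  also have "\<dots> \<le> 2 * \<alpha> ^ (H - 1) / (1 - \<alpha>) * e"
    using const by (rule mult_right_mono) (simp add: e_def norm_inf_nonneg)
  finally show ?thesis by (simp add: e_def)
qed

lemma norm_inf_lookahead_target_le:
  assumes greedy: "Tmu P g \<alpha> \<mu> ((Tb ^^ (H - 1)) x) = (Tb ^^ H) x" and "H \<ge> 1" and "\<kappa> \<ge> 0"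
    and bias: "norm_inf (\<lambda>i. m i - (Tb ^^ (H - 1)) x i)
                 \<le> \<kappa> * norm_inf (\<lambda>i. (Tb ^^ (H - 1)) x i - Jpol P g \<alpha> \<mu> i) + \<delta>"
  shows "norm_inf (\<lambda>i. m i - Js i)
           \<le> (\<alpha> ^ (H - 1) + \<kappa> * (2 * \<alpha> ^ (H - 1) / (1 - \<alpha>))) * norm_inf (\<lambda>i. x i - Js i) + \<delta>"
proof -
  have "norm_inf (\<lambda>i. m i - Js i) \<le> norm_inf (\<lambda>i. m i - (Tb ^^ (H - 1)) x i) + norm_inf (\<lambda>i. (Tb ^^ (H - 1)) x i - Js i)"
    by (rule norm_inf_triangle)
  moreover have "\<kappa> * norm_inf (\<lambda>i. (Tb ^^ (H - 1)) x i - Jpol P g \<alpha> \<mu> i)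
      \<le> \<kappa> * (2 * \<alpha> ^ (H - 1) / (1 - \<alpha>) * norm_inf (\<lambda>i. x i - Js i))"
    using norm_inf_lookahead_value_minus_Jpol_le[OF greedy \<open>H \<ge> 1\<close>] \<open>\<kappa> \<ge> 0\<close> by (rule mult_left_mono)
  ultimately show ?thesis
    using bias norm_inf_funpow_Tbell_Jstar[of "H - 1" x] by (simp add: algebra_simps)
qed

end

section \<open>Averaging recursions\<close>

lemma contracting_recursion_reaches_level:
  fixes y a :: "nat \<Rightarrow> real"
  assumes rec: "\<And>k. k \<ge> N \<Longrightarrow> y (Suc k) \<le> (1 - a k) * y k"
    and a_pos: "\<And>k. 0 < a k" and not_summable: "\<not> summable a" and "\<epsilon> > 0"
  shows "\<exists>k\<ge>N. y k \<le> \<epsilon>"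
proof (rule ccontr)
  assume "\<not> ?thesis"
  then have big: "\<And>k. k \<ge> N \<Longrightarrow> y k > \<epsilon>" by force
  have decrease: "y (N + n) \<le> y N - \<epsilon> * (\<Sum>j<n. a (j + N))" for n
  proof (induction n)
    case (Suc n)
    have "y (N + Suc n) \<le> y (N + n) - a (N + n) * y (N + n)"
      using rec[of "N + n"] by (simp add: algebra_simps)
    also have "\<dots> \<le> y (N + n) - a (N + n) * \<epsilon>"
      using big[of "N + n"] a_pos[of "N + n"] by simp
    finally show ?case using Suc by (simp add: algebra_simps)
  qed simp
  have "(\<Sum>j\<le>n. a (j + N)) \<le> y N / \<epsilon>" for n
    using decrease[of "Suc n"] big[of "N + Suc n"] \<open>\<epsilon> > 0\<close> by (simp add: field_simps lessThan_Suc_atMost)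
  then have "summable (\<lambda>j. a (j + N))"
    by (intro bounded_imp_summable[where B = "y N / \<epsilon>"]) (use a_pos less_imp_le in auto)
  then show False using not_summable by (simp add: summable_iff_shift)
qed

lemma averaging_recursion_eventually_le:
  fixes x a c :: "nat \<Rightarrow> real"
  assumes rec: "\<And>k. x (Suc k) \<le> (1 - a k) * x k + a k * c k"
    and a_pos: "\<And>k. 0 < a k" and a_le_1: "\<And>k. a k \<le> 1" and not_summable: "\<not> summable a"
    and lim: "c \<longlonglongrightarrow> c0" and "\<epsilon> > 0"
  shows "eventually (\<lambda>k. x k \<le> c0 + \<epsilon>) sequentially"
proof -
  obtain N where N: "\<And>k. k \<ge> N \<Longrightarrow> c k \<le> c0 + \<epsilon> / 2"
    using lim \<open>\<epsilon> > 0\<close> unfolding LIMSEQ_def dist_real_def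
    by (metis abs_diff_less_iff half_gt_zero less_eq_real_def)
  define y where "y k = x k - (c0 + \<epsilon> / 2)" for k
  have y_rec: "y (Suc k) \<le> (1 - a k) * y k" if "k \<ge> N" for k
  proof -
    have "a k * c k \<le> a k * (c0 + \<epsilon> / 2)" using N[OF that] a_pos[of k] by simp
    moreover have "(1 - a k) * y k = (1 - a k) * x k + a k * (c0 + \<epsilon> / 2) - (c0 + \<epsilon> / 2)"
      by (simp add: y_def field_simps)
    ultimately show ?thesis using rec[of k] by (simp add: y_def)
  qed
  obtain k0 where "k0 \<ge> N" "y k0 \<le> \<epsilon> / 2"
    using contracting_recursion_reaches_level[OF y_rec a_pos not_summable] \<open>\<epsilon> > 0\<close>
    by (metis half_gt_zero)
  have stay: "y k \<le> \<epsilon> / 2" if "k \<ge> k0" for k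
    using that
  proof (induction k rule: dec_induct)
    case (step k)
    have "y (Suc k) \<le> (1 - a k) * y k" using y_rec step \<open>k0 \<ge> N\<close> by simp
    also have "\<dots> \<le> max 0 (y k)"
    proof (cases "y k \<ge> 0")
      case True
      then show ?thesis using a_pos[of k] by (simp add: algebra_simps)
    next
      case False
      then show ?thesis using a_le_1[of k] by (simp add: mult_nonneg_nonpos)
    qed
    finally show ?case using step \<open>\<epsilon> > 0\<close> by simp
  qed (use \<open>y k0 \<le> \<epsilon> / 2\<close> in simp)
  have "x k \<le> c0 + \<epsilon>" if "k \<ge> k0" for k
    using stay[OF that] by (simp add: y_def)
  then show ?thesis unfolding eventually_sequentially by blast
qed

lemma limsup_le_of_eventually_le:
  fixes x :: "nat \<Rightarrow> real"
  assumes "\<And>\<epsilon>. \<epsilon> > 0 \<Longrightarrow> eventually (\<lambda>k. x k \<le> c + \<epsilon>) sequentially"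
  shows "limsup (\<lambda>k. ereal (x k)) \<le> ereal c"
proof (rule ereal_le_epsilon2)
  fix \<epsilon> :: real assume "\<epsilon> > 0"
  have "eventually (\<lambda>k. ereal (x k) \<le> ereal (c + \<epsilon>)) sequentially"
    using assms[OF \<open>\<epsilon> > 0\<close>] by eventually_elim simp
  then have "limsup (\<lambda>k. ereal (x k)) \<le> ereal (c + \<epsilon>)" by (rule Limsup_bounded)
  then show "limsup (\<lambda>k. ereal (x k)) \<le> ereal c + ereal \<epsilon>" by simp
qed

lemma limsup_Suc_le_scaled:
  fixes a b :: "nat \<Rightarrow> real"
  assumes a_ev: "\<And>\<epsilon>. \<epsilon> > 0 \<Longrightarrow> eventually (\<lambda>k. a k \<le> D + \<epsilon>) sequentially"
    and b_le: "\<And>k. b (Suc k) \<le> L * a k" and "L \<ge> 0"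
  shows "limsup (\<lambda>k. ereal (b k)) \<le> ereal (L * D)"
proof (rule limsup_le_of_eventually_le)
  fix \<epsilon> :: real assume "\<epsilon> > 0"
  then have "eventually (\<lambda>k. a k \<le> D + \<epsilon> / (L + 1)) sequentially"
    using \<open>L \<ge> 0\<close> by (intro a_ev) simp
  then have "eventually (\<lambda>k. b (Suc k) \<le> L * D + \<epsilon>) sequentially"
  proof (rule eventually_mono)
    fix k assume "a k \<le> D + \<epsilon> / (L + 1)"
    then have "L * a k \<le> L * D + L * (\<epsilon> / (L + 1))"
      using \<open>L \<ge> 0\<close> by (metis distrib_left mult_left_mono)
    also have "L * (\<epsilon> / (L + 1)) \<le> \<epsilon>"
      using \<open>L \<ge> 0\<close> \<open>\<epsilon> > 0\<close> by (simp add: field_simps)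
    finally show "b (Suc k) \<le> L * D + \<epsilon>" using b_le[of k] by linarith
  qed
  then show "eventually (\<lambda>k. b k \<le> L * D + \<epsilon>) sequentially"
    by (subst eventually_sequentially_Suc[symmetric])
qed

lemma norm_inf_convex_comb_le:
  assumes "0 \<le> t" "t \<le> 1"
  shows "norm_inf (\<lambda>i. (1 - t) * a i + t * b i) \<le> (1 - t) * norm_inf a + t * norm_inf (b :: 's::finite \<Rightarrow> real)"
proof (rule norm_inf_leI)
  fix i
  have "\<bar>(1 - t) * a i + t * b i\<bar> \<le> (1 - t) * \<bar>a i\<bar> + t * \<bar>b i\<bar>"
    using assms abs_triangle_ineq[of "(1 - t) * a i" "t * b i"] by (simp add: abs_mult)
  also have "\<dots> \<le> (1 - t) * norm_inf a + t * norm_inf b"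
    using assms by (intro add_mono mult_left_mono abs_le_norm_inf) auto
  finally show "\<bar>(1 - t) * a i + t * b i\<bar> \<le> \<dots>" .
qed

lemma norm_inf_shifted_averaging_le:
  fixes x v m r :: "nat \<Rightarrow> 's::finite \<Rightarrow> real" and J :: "'s \<Rightarrow> real"
  assumes step: "\<And>i. x (Suc k) i = (1 - \<gamma> k) * x k i + \<gamma> k * v k i"
    and r_step: "\<And>i. r (Suc k) i = r k i - \<gamma> k * (v k i - m k i)"
    and target: "norm_inf (\<lambda>i. m k i - J i) \<le> \<beta> * norm_inf (\<lambda>i. x k i - J i) + \<delta>"
    and "0 < \<gamma> k" "\<gamma> k \<le> 1" "0 \<le> \<beta>" "\<beta> < 1"
  shows "norm_inf (\<lambda>i. x (Suc k) i - J i + r (Suc k) i)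
    \<le> (1 - \<gamma> k * (1 - \<beta>)) * norm_inf (\<lambda>i. x k i - J i + r k i)
       + \<gamma> k * (1 - \<beta>) * (((1 + \<beta>) * norm_inf (r k) + \<delta>) / (1 - \<beta>))"
proof -
  let ?z = "\<lambda>i. x k i - J i + r k i"
  have "x (Suc k) i - J i + r (Suc k) i = (1 - \<gamma> k) * ?z i + \<gamma> k * (m k i - J i + r k i)" for i
    by (simp add: step r_step algebra_simps)
  then have "norm_inf (\<lambda>i. x (Suc k) i - J i + r (Suc k) i)
      \<le> (1 - \<gamma> k) * norm_inf ?z + \<gamma> k * norm_inf (\<lambda>i. m k i - J i + r k i)"
    using assms(4,5) by (simp add: norm_inf_convex_comb_le)
  also have "\<dots> \<le> (1 - \<gamma> k) * norm_inf ?z + \<gamma> k * (\<beta> * (norm_inf ?z + norm_inf (r k)) + \<delta> + norm_inf (r k))"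
  proof -
    have "norm_inf (\<lambda>i. x k i - J i) \<le> norm_inf ?z + norm_inf (r k)"
      using norm_inf_add_le[of ?z "\<lambda>i. - r k i"] by (simp add: norm_inf_uminus)
    then show ?thesis
      using norm_inf_add_le[of "\<lambda>i. m k i - J i" "r k"] target mult_left_mono[OF _ \<open>0 \<le> \<beta>\<close>] \<open>0 < \<gamma> k\<close>
      by (intro add_left_mono mult_left_mono) fastforce+
  qed
  also have "\<dots> = (1 - \<gamma> k * (1 - \<beta>)) * norm_inf ?z
      + \<gamma> k * (1 - \<beta>) * (((1 + \<beta>) * norm_inf (r k) + \<delta>) / (1 - \<beta>))"
    using \<open>\<beta> < 1\<close> by (simp add: field_simps)
  finally show ?thesis .
qed

text \<open>Subtracting the remaining noise \<open>r k = \<Sum>j\<ge>k. \<gamma> j * (v j - m j)\<close> turns the noisy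
  averaging into a noise-free one for \<open>x k - J + r k\<close>, with the vanishing
  perturbation \<open>r k\<close> moved into the target.\<close>
lemma averaged_iteration_eventually_le:
  fixes x v m :: "nat \<Rightarrow> 's::finite \<Rightarrow> real" and J :: "'s \<Rightarrow> real"
  assumes step: "\<And>k i. x (Suc k) i = (1 - \<gamma> k) * x k i + \<gamma> k * v k i"
    and target: "\<And>k. norm_inf (\<lambda>i. m k i - J i) \<le> \<beta> * norm_inf (\<lambda>i. x k i - J i) + \<delta>"
    and noise: "\<And>i. convergent (\<lambda>n. \<Sum>k<n. \<gamma> k * (v k i - m k i))"
    and step_pos: "\<And>k. 0 < \<gamma> k" and step_le_1: "\<And>k. \<gamma> k \<le> 1" and step_div: "\<not> summable \<gamma>"
    and "0 \<le> \<beta>" "\<beta> < 1" and "\<epsilon> > 0"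
  shows "eventually (\<lambda>k. norm_inf (\<lambda>i. x k i - J i) \<le> \<delta> / (1 - \<beta>) + \<epsilon>) sequentially"
proof -
  define S where "S n i = (\<Sum>k<n. \<gamma> k * (v k i - m k i))" for n i
  define r where "r k i = lim (\<lambda>n. S n i) - S k i" for k i
  define z where "z k = norm_inf (\<lambda>i. x k i - J i + r k i)" for k
  have "(\<lambda>k. r k i) \<longlonglongrightarrow> lim (\<lambda>n. S n i) - lim (\<lambda>n. S n i)" for i
    unfolding r_def using noise[of i]
    by (intro tendsto_intros) (simp add: S_def convergent_LIMSEQ_iff)
  then have r_lim: "(\<lambda>k. norm_inf (r k)) \<longlonglongrightarrow> 0"
    by (intro tendsto_norm_inf_0) simp
  have "eventually (\<lambda>k. z k \<le> \<delta> / (1 - \<beta>) + \<epsilon> / 2) sequentially"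
  proof (rule averaging_recursion_eventually_le)
    show "z (Suc k) \<le> (1 - \<gamma> k * (1 - \<beta>)) * z k
        + \<gamma> k * (1 - \<beta>) * (((1 + \<beta>) * norm_inf (r k) + \<delta>) / (1 - \<beta>))" for k
      unfolding z_def using step target step_pos step_le_1 \<open>0 \<le> \<beta>\<close> \<open>\<beta> < 1\<close>
      by (intro norm_inf_shifted_averaging_le) (auto simp: r_def S_def)
    show "\<And>k. 0 < \<gamma> k * (1 - \<beta>)" "\<And>k. \<gamma> k * (1 - \<beta>) \<le> 1"
      using step_pos step_le_1 \<open>0 \<le> \<beta>\<close> \<open>\<beta> < 1\<close> by (simp_all add: mult_le_one)
    show "\<not> summable (\<lambda>k. \<gamma> k * (1 - \<beta>))"
      using step_div \<open>\<beta> < 1\<close> summable_divide[of "\<lambda>k. \<gamma> k * (1 - \<beta>)" "1 - \<beta>"] by auto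
    show "(\<lambda>k. ((1 + \<beta>) * norm_inf (r k) + \<delta>) / (1 - \<beta>)) \<longlonglongrightarrow> \<delta> / (1 - \<beta>)"
      using \<open>\<beta> < 1\<close> by (auto intro!: tendsto_eq_intros r_lim)
  qed (use \<open>\<epsilon> > 0\<close> in simp)
  moreover have "eventually (\<lambda>k. norm_inf (r k) \<le> \<epsilon> / 2) sequentially"
    using order_tendstoD(2)[OF r_lim, of "\<epsilon> / 2"] \<open>\<epsilon> > 0\<close> by (auto elim: eventually_mono)
  ultimately show ?thesis
  proof eventually_elim
    case (elim k)
    moreover have "norm_inf (\<lambda>i. x k i - J i) \<le> z k + norm_inf (r k)"
      using norm_inf_add_le[of "\<lambda>i. x k i - J i + r k i" "\<lambda>i. - r k i"] by (simp add: z_def norm_inf_uminus)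
    ultimately show ?case by linarith
  qed
qed

context discounted_mdp
begin

lemma lookahead_averaging_limsup:
  fixes x v m :: "nat \<Rightarrow> 's \<Rightarrow> real" and \<mu> :: "nat \<Rightarrow> 's \<Rightarrow> 'a"
    and H :: nat and \<kappa> :: real
  defines "L \<equiv> 2 * \<alpha> ^ (H - 1) / (1 - \<alpha>)"
  defines "\<beta> \<equiv> \<alpha> ^ (H - 1) + \<kappa> * L"
  assumes step: "\<And>k i. x (Suc k) i = (1 - \<gamma> k) * x k i + \<gamma> k * v k i"
    and greedy: "\<And>k. Tmu P g \<alpha> (\<mu> (Suc k)) ((Tb ^^ (H - 1)) (x k)) = (Tb ^^ H) (x k)"
    and bias: "\<And>k. norm_inf (\<lambda>i. m k i - (Tb ^^ (H - 1)) (x k) i)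
         \<le> \<kappa> * norm_inf (\<lambda>i. (Tb ^^ (H - 1)) (x k) i - Jpol P g \<alpha> (\<mu> (Suc k)) i) + \<delta>"
    and noise: "\<And>i. convergent (\<lambda>n. \<Sum>k<n. \<gamma> k * (v k i - m k i))"
    and step_pos: "\<And>k. 0 < \<gamma> k" and step_le_1: "\<And>k. \<gamma> k \<le> 1" and step_div: "\<not> summable \<gamma>"
    and "H \<ge> 1" and "\<kappa> \<ge> 0" and "\<beta> < 1"
  shows "limsup (\<lambda>k. ereal (norm_inf (\<lambda>i. x k i - Js i))) \<le> ereal (\<delta> / (1 - \<beta>))"
    and "limsup (\<lambda>k. ereal (norm_inf (\<lambda>i. Jpol P g \<alpha> (\<mu> k) i - Js i))) \<le> ereal (L * (\<delta> / (1 - \<beta>)))"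
proof -
  have "L \<ge> 0" "\<beta> \<ge> 0"
    using discount_nonneg discount_less_1 \<open>\<kappa> \<ge> 0\<close> by (simp_all add: L_def \<beta>_def)
  have x_ev: "eventually (\<lambda>k. norm_inf (\<lambda>i. x k i - Js i) \<le> \<delta> / (1 - \<beta>) + \<epsilon>) sequentially"
    if "\<epsilon> > 0" for \<epsilon>
  proof (rule averaged_iteration_eventually_le[OF step _ noise step_pos step_le_1 step_div])
    show "norm_inf (\<lambda>i. m k i - Js i) \<le> \<beta> * norm_inf (\<lambda>i. x k i - Js i) + \<delta>" for k
      unfolding \<beta>_def L_def by (rule norm_inf_lookahead_target_le[OF greedy \<open>H \<ge> 1\<close> \<open>\<kappa> \<ge> 0\<close> bias])
  qed (use \<open>\<beta> \<ge> 0\<close> \<open>\<beta> < 1\<close> \<open>\<epsilon> > 0\<close> in auto)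
  then show "limsup (\<lambda>k. ereal (norm_inf (\<lambda>i. x k i - Js i))) \<le> ereal (\<delta> / (1 - \<beta>))"
    by (rule limsup_le_of_eventually_le)
  have policy_le: "norm_inf (\<lambda>i. Jpol P g \<alpha> (\<mu> (Suc k)) i - Js i) \<le> L * norm_inf (\<lambda>i. x k i - Js i)" for k
  proof -
    have "\<alpha> ^ H \<le> \<alpha> ^ (H - 1)"
      using discount_nonneg discount_less_1 by (intro power_decreasing) auto
    then have "2 * \<alpha> ^ H / (1 - \<alpha>) \<le> L"
      using discount_less_1 by (simp add: L_def divide_right_mono)
    then show ?thesis
      using norm_inf_lookahead_policy_le[OF greedy \<open>H \<ge> 1\<close>] norm_inf_nonneg
      by (meson mult_right_mono order_trans)
  qed
  show "limsup (\<lambda>k. ereal (norm_inf (\<lambda>i. Jpol P g \<alpha> (\<mu> k) i - Js i))) \<le> ereal (L * (\<delta> / (1 - \<beta>)))"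
    using x_ev policy_le \<open>L \<ge> 0\<close> by (rule limsup_Suc_le_scaled)
qed

end

section \<open>Square-summable martingale differences\<close>

lemma convergent_if_close_to_some_index:
  fixes s :: "nat \<Rightarrow> real"
  assumes "\<forall>j. \<exists>m. \<forall>k\<ge>m. \<bar>s k - s m\<bar> < 1 / Suc j"
  shows "convergent s"
proof (rule real_Cauchy_convergent, rule CauchyI)
  fix e :: real assume "e > 0"
  then obtain j where j: "1 / Suc j < e / 2"
    using reals_Archimedean[of "e / 2"] by (auto simp: inverse_eq_divide)
  then obtain m where m: "\<forall>k\<ge>m. \<bar>s k - s m\<bar> < e / 2"
    using assms by (meson less_trans)
  have "\<bar>s p - s q\<bar> < e" if "p \<ge> m" "q \<ge> m" for p q
    using m[rule_format, OF that(1)] m[rule_format, OF that(2)] by arith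
  then show "\<exists>M. \<forall>p\<ge>M. \<forall>q\<ge>M. norm (s p - s q) < e" by auto
qed

context prob_space
begin

definition bounded_rv :: "('a \<Rightarrow> real) \<Rightarrow> bool" where
  "bounded_rv f \<longleftrightarrow> (\<exists>K. \<forall>\<omega>\<in>space M. \<bar>f \<omega>\<bar> \<le> K)"

lemma bounded_rvI: "(\<And>\<omega>. \<omega> \<in> space M \<Longrightarrow> \<bar>f \<omega>\<bar> \<le> K) \<Longrightarrow> bounded_rv f"
  unfolding bounded_rv_def by blast

lemma bounded_rv_add: "bounded_rv f \<Longrightarrow> bounded_rv g \<Longrightarrow> bounded_rv (\<lambda>\<omega>. f \<omega> + g \<omega>)"
  unfolding bounded_rv_def by (metis (no_types, opaque_lifting) abs_triangle_ineq add_mono order_trans)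

lemma bounded_rv_diff: "bounded_rv f \<Longrightarrow> bounded_rv g \<Longrightarrow> bounded_rv (\<lambda>\<omega>. f \<omega> - g \<omega>)"
  unfolding bounded_rv_def by (metis (no_types, opaque_lifting) abs_triangle_ineq4 add_mono order_trans)

lemma bounded_rv_mult:
  assumes "bounded_rv f" "bounded_rv g"
  shows "bounded_rv (\<lambda>\<omega>. f \<omega> * g \<omega>)"
proof -
  obtain K L where "\<forall>\<omega>\<in>space M. \<bar>f \<omega>\<bar> \<le> K" "\<forall>\<omega>\<in>space M. \<bar>g \<omega>\<bar> \<le> L"
    using assms unfolding bounded_rv_def by blast
  then show ?thesis
    by (intro bounded_rvI[of _ "K * L"]) (simp add: abs_mult mult_mono')
qed

lemma bounded_rv_const: "bounded_rv (\<lambda>_. a)"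
  by (rule bounded_rvI[of _ "\<bar>a\<bar>"]) simp

lemma bounded_rv_indicator: "bounded_rv (indicator A)"
  by (rule bounded_rvI[of _ 1]) (simp add: indicator_def)

lemma integrable_bounded_rv: "f \<in> borel_measurable M \<Longrightarrow> bounded_rv f \<Longrightarrow> integrable M f"
  unfolding bounded_rv_def by (auto intro!: integrable_const_bound AE_I2)

end

text \<open>Martingale differences are encoded without conditional expectations: \<open>X k\<close> is
  \<open>F (Suc k)\<close>-measurable and orthogonal to every bounded \<open>F k\<close>-measurable function,
  which for bounded \<open>X k\<close> is equivalent to \<open>E[X k | F k] = 0\<close>.\<close>
locale martingale_differences = prob_space M for M :: "'w measure" +
  fixes F :: "nat \<Rightarrow> 'w measure" and X :: "nat \<Rightarrow> 'w \<Rightarrow> real" and b :: "nat \<Rightarrow> real"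
  assumes subalgebra_F: "\<And>k. subalgebra M (F k)"
    and filtration: "\<And>k. sets (F k) \<subseteq> sets (F (Suc k))"
    and X_measurable: "\<And>k. X k \<in> borel_measurable (F (Suc k))"
    and X_bounded: "\<And>k \<omega>. \<omega> \<in> space M \<Longrightarrow> \<bar>X k \<omega>\<bar> \<le> b k"
    and X_orthogonal: "\<And>k Y K. Y \<in> borel_measurable (F k) \<Longrightarrow> (\<And>\<omega>. \<omega> \<in> space M \<Longrightarrow> \<bar>Y \<omega>\<bar> \<le> K)
                         \<Longrightarrow> (\<integral>\<omega>. X k \<omega> * Y \<omega> \<partial>M) = 0"
begin

lemma bounded_rv_X: "bounded_rv (X k)"
  by (rule bounded_rvI[OF X_bounded])

lemmas bounded_rv_intros =
  bounded_rv_add bounded_rv_diff bounded_rv_mult bounded_rv_const bounded_rv_indicator bounded_rv_X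

lemma integral_X_mult_eq_0:
  "Y \<in> borel_measurable (F k) \<Longrightarrow> bounded_rv Y \<Longrightarrow> (\<integral>\<omega>. X k \<omega> * Y \<omega> \<partial>M) = 0"
  unfolding bounded_rv_def using X_orthogonal by blast

lemma space_F: "space (F k) = space M"
  using subalgebra_F[of k] by (simp add: subalgebra_def)

lemma sets_F_mono: "m \<le> n \<Longrightarrow> sets (F m) \<subseteq> sets (F n)"
  by (rule lift_Suc_mono_le[where f = "\<lambda>k. sets (F k)", OF filtration])

lemma measurable_F_mono: "f \<in> borel_measurable (F m) \<Longrightarrow> m \<le> n \<Longrightarrow> f \<in> borel_measurable (F n)"
  by (rule measurable_from_subalg[of "F n" "F m"]) (auto simp: subalgebra_def space_F sets_F_mono)

lemma measurable_F_M: "f \<in> borel_measurable (F m) \<Longrightarrow> f \<in> borel_measurable M"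
  by (rule measurable_from_subalg[OF subalgebra_F])

lemma sets_F_M: "A \<in> sets (F m) \<Longrightarrow> A \<in> sets M"
  using subalgebra_F[of m] by (auto simp: subalgebra_def)

definition psum :: "nat \<Rightarrow> 'w \<Rightarrow> real" where
  "psum n \<omega> = (\<Sum>k<n. X k \<omega>)"

lemma psum_Suc: "psum (Suc n) \<omega> = psum n \<omega> + X n \<omega>"
  by (simp add: psum_def)

lemma psum_measurable: "psum n \<in> borel_measurable (F n)"
proof (induction n)
  case (Suc n)
  then have "psum n \<in> borel_measurable (F (Suc n))" by (simp add: measurable_F_mono)
  with X_measurable[of n] show ?case unfolding psum_Suc[abs_def] by measurable
qed (simp add: psum_def)

lemma psum_measurable_M [measurable]: "psum n \<in> borel_measurable M"
  by (rule measurable_F_M[OF psum_measurable])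

lemma X_measurable_M [measurable]: "X k \<in> borel_measurable M"
  by (rule measurable_F_M[OF X_measurable])

lemma bounded_rv_psum: "bounded_rv (psum n)"
  by (induction n) (simp_all add: psum_def bounded_rv_const bounded_rv_add bounded_rv_X)

lemma integral_psum_increment_mult_eq_0:
  assumes "m \<le> n" and Y: "Y \<in> borel_measurable (F m)" "bounded_rv Y"
  shows "(\<integral>\<omega>. (psum n \<omega> - psum m \<omega>) * Y \<omega> \<partial>M) = 0"
  using \<open>m \<le> n\<close>
proof (induction n rule: dec_induct)
  case (step n)
  have [measurable]: "Y \<in> borel_measurable M" by (rule measurable_F_M[OF Y(1)])
  have "(\<integral>\<omega>. X n \<omega> * Y \<omega> \<partial>M) = 0"
    by (rule integral_X_mult_eq_0[OF measurable_F_mono[OF Y(1) step(1)] Y(2)])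
  moreover have "integrable M (\<lambda>\<omega>. (psum n \<omega> - psum m \<omega>) * Y \<omega>)" "integrable M (\<lambda>\<omega>. X n \<omega> * Y \<omega>)"
    by (intro integrable_bounded_rv bounded_rv_intros bounded_rv_psum Y(2); measurable)+
  moreover have "(\<lambda>\<omega>. (psum (Suc n) \<omega> - psum m \<omega>) * Y \<omega>)
      = (\<lambda>\<omega>. (psum n \<omega> - psum m \<omega>) * Y \<omega> + X n \<omega> * Y \<omega>)"
    by (simp add: psum_Suc algebra_simps)
  ultimately show ?case
    using step.IH by simp
qed simp

lemma integrable_psum_sq: "integrable M (\<lambda>\<omega>. (psum n \<omega> - psum m \<omega>)\<^sup>2 * Z \<omega>)"
  if "Z \<in> borel_measurable M" "bounded_rv Z"
  unfolding power2_eq_square using that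
  by (intro integrable_bounded_rv bounded_rv_intros bounded_rv_psum) measurable

text \<open>The squared deviations from \<open>psum m\<close> form a submartingale: the cross term with
  the later increments vanishes by orthogonality.\<close>
lemma integral_psum_sq_mono:
  assumes "m \<le> k" "k \<le> n"
    and Z: "Z \<in> borel_measurable (F k)" "bounded_rv Z" "\<And>\<omega>. \<omega> \<in> space M \<Longrightarrow> Z \<omega> \<ge> 0"
  shows "(\<integral>\<omega>. (psum k \<omega> - psum m \<omega>)\<^sup>2 * Z \<omega> \<partial>M) \<le> (\<integral>\<omega>. (psum n \<omega> - psum m \<omega>)\<^sup>2 * Z \<omega> \<partial>M)"
proof -
  have [measurable]: "Z \<in> borel_measurable M" by (rule measurable_F_M[OF Z(1)])
  have "(\<lambda>\<omega>. 2 * ((psum k \<omega> - psum m \<omega>) * Z \<omega>)) \<in> borel_measurable (F k)"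
    using psum_measurable[of k] measurable_F_mono[OF psum_measurable \<open>m \<le> k\<close>] Z(1) by measurable
  then have cross: "(\<integral>\<omega>. (psum n \<omega> - psum k \<omega>) * (2 * ((psum k \<omega> - psum m \<omega>) * Z \<omega>)) \<partial>M) = 0"
    using \<open>k \<le> n\<close> Z(2) by (intro integral_psum_increment_mult_eq_0 bounded_rv_intros bounded_rv_psum)
  have "integrable M (\<lambda>\<omega>. (psum n \<omega> - psum k \<omega>) * (2 * ((psum k \<omega> - psum m \<omega>) * Z \<omega>)))"
    using Z(2) by (intro integrable_bounded_rv bounded_rv_intros bounded_rv_psum) measurable
  moreover have "(\<lambda>\<omega>. (psum n \<omega> - psum m \<omega>)\<^sup>2 * Z \<omega>)
      = (\<lambda>\<omega>. (psum k \<omega> - psum m \<omega>)\<^sup>2 * Z \<omega> + (psum n \<omega> - psum k \<omega>)\<^sup>2 * Z \<omega>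
             + (psum n \<omega> - psum k \<omega>) * (2 * ((psum k \<omega> - psum m \<omega>) * Z \<omega>)))"
    by (simp add: power2_eq_square algebra_simps)
  moreover have "0 \<le> (\<integral>\<omega>. (psum n \<omega> - psum k \<omega>)\<^sup>2 * Z \<omega> \<partial>M)"
    using Z(3) by (intro integral_nonneg_AE AE_I2) simp
  ultimately show ?thesis
    using cross integrable_psum_sq[OF _ Z(2)] by simp
qed

lemma integral_psum_increment_sq_le:
  assumes "m \<le> n"
  shows "(\<integral>\<omega>. (psum n \<omega> - psum m \<omega>)\<^sup>2 \<partial>M) \<le> (\<Sum>k\<in>{m..<n}. (b k)\<^sup>2)"
  using assms
proof (induction n rule: dec_induct)
  case (step n)
  have "(\<lambda>\<omega>. 2 * (psum n \<omega> - psum m \<omega>)) \<in> borel_measurable (F n)"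
    using psum_measurable[of n] measurable_F_mono[OF psum_measurable step(1)] by measurable
  then have cross: "(\<integral>\<omega>. X n \<omega> * (2 * (psum n \<omega> - psum m \<omega>)) \<partial>M) = 0"
    by (rule integral_X_mult_eq_0) (intro bounded_rv_intros bounded_rv_psum)
  have integrable: "integrable M (\<lambda>\<omega>. X n \<omega> * (2 * (psum n \<omega> - psum m \<omega>)))"
    "integrable M (\<lambda>\<omega>. (X n \<omega>)\<^sup>2)"
    unfolding power2_eq_square by (intro integrable_bounded_rv bounded_rv_intros bounded_rv_psum; measurable)+
  have X_sq: "(\<integral>\<omega>. (X n \<omega>)\<^sup>2 \<partial>M) \<le> (b n)\<^sup>2"
  proof -
    have "(\<integral>\<omega>. (X n \<omega>)\<^sup>2 \<partial>M) \<le> (\<integral>\<omega>. (b n)\<^sup>2 \<partial>M)"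
    proof (rule integral_mono[OF integrable(2)])
      show "(X n \<omega>)\<^sup>2 \<le> (b n)\<^sup>2" if "\<omega> \<in> space M" for \<omega>
        using X_bounded[OF that, of n] by (metis abs_ge_zero power2_abs power_mono)
    qed simp
    then show ?thesis by (simp add: prob_space)
  qed
  have "(\<lambda>\<omega>. (psum (Suc n) \<omega> - psum m \<omega>)\<^sup>2)
      = (\<lambda>\<omega>. (psum n \<omega> - psum m \<omega>)\<^sup>2 * 1 + X n \<omega> * (2 * (psum n \<omega> - psum m \<omega>)) + (X n \<omega>)\<^sup>2)"
    by (simp add: psum_Suc power2_eq_square algebra_simps)
  then have "(\<integral>\<omega>. (psum (Suc n) \<omega> - psum m \<omega>)\<^sup>2 \<partial>M)
      = (\<integral>\<omega>. (psum n \<omega> - psum m \<omega>)\<^sup>2 \<partial>M) + (\<integral>\<omega>. (X n \<omega>)\<^sup>2 \<partial>M)"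
    using cross integrable integrable_psum_sq[of "\<lambda>_. 1" n m] bounded_rv_const by simp
  then show ?case using step.IH X_sq step(1) by simp
qed (simp add: prob_space)

definition first_exit :: "nat \<Rightarrow> real \<Rightarrow> nat \<Rightarrow> 'w set" where
  "first_exit m l k = {\<omega>\<in>space M. l \<le> \<bar>psum k \<omega> - psum m \<omega>\<bar> \<and> (\<forall>j\<in>{m..<k}. \<bar>psum j \<omega> - psum m \<omega>\<bar> < l)}"

lemma first_exit_in_F:
  assumes "m \<le> k"
  shows "first_exit m l k \<in> sets (F k)"
proof -
  have [measurable]: "psum j \<in> borel_measurable (F k)" if "j \<le> k" for j
    using measurable_F_mono[OF psum_measurable that] .
  have "first_exit m l k = {\<omega>\<in>space (F k). l \<le> \<bar>psum k \<omega> - psum m \<omega>\<bar>}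
      \<inter> {\<omega>\<in>space (F k). \<forall>j\<in>{m..<k}. \<bar>psum j \<omega> - psum m \<omega>\<bar> < l}"
    unfolding first_exit_def space_F by blast
  moreover have "{\<omega>\<in>space (F k). \<forall>j\<in>{m..<k}. \<bar>psum j \<omega> - psum m \<omega>\<bar> < l} \<in> sets (F k)"
    using assms by (intro sets.sets_Collect_finite_All) auto
  ultimately show ?thesis using assms by simp
qed

lemma first_exit_in_M [measurable]: "m \<le> k \<Longrightarrow> first_exit m l k \<in> sets M"
  by (rule sets_F_M[OF first_exit_in_F])

lemma disjoint_family_first_exit: "disjoint_family_on (first_exit m l) {m..}"
  unfolding disjoint_family_on_def first_exit_def
  by (auto simp: not_less) (metis atLeastLessThan_iff linorder_neqE_nat not_less)

lemma exceed_eq_UN_first_exit: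
  "{\<omega>\<in>space M. \<exists>k\<in>{m..n}. l \<le> \<bar>psum k \<omega> - psum m \<omega>\<bar>} = (\<Union>k\<in>{m..n}. first_exit m l k)"
proof (intro equalityI subsetI)
  fix \<omega> assume "\<omega> \<in> {\<omega>\<in>space M. \<exists>k\<in>{m..n}. l \<le> \<bar>psum k \<omega> - psum m \<omega>\<bar>}"
  then obtain k where "\<omega> \<in> space M" "k \<in> {m..n}" "l \<le> \<bar>psum k \<omega> - psum m \<omega>\<bar>"
    and "\<And>j. j < k \<Longrightarrow> \<not> (j \<in> {m..n} \<and> l \<le> \<bar>psum j \<omega> - psum m \<omega>\<bar>)"
    using exists_least_iff[of "\<lambda>k. k \<in> {m..n} \<and> l \<le> \<bar>psum k \<omega> - psum m \<omega>\<bar>"] by auto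
  then show "\<omega> \<in> (\<Union>k\<in>{m..n}. first_exit m l k)"
    unfolding first_exit_def by (force simp: not_le)
qed (auto simp: first_exit_def)

lemma first_exit_mass_le:
  assumes "m \<le> k" "k \<le> n" "0 \<le> l"
  shows "l\<^sup>2 * prob (first_exit m l k) \<le> (\<integral>\<omega>. (psum n \<omega> - psum m \<omega>)\<^sup>2 * indicator (first_exit m l k) \<omega> \<partial>M)"
proof -
  let ?A = "first_exit m l k"
  have "l\<^sup>2 * prob ?A = (\<integral>\<omega>. l\<^sup>2 * indicator ?A \<omega> \<partial>M)"
    using assms by simp
  also have "\<dots> \<le> (\<integral>\<omega>. (psum k \<omega> - psum m \<omega>)\<^sup>2 * indicator ?A \<omega> \<partial>M)"
  proof (rule integral_mono)
    show "integrable M (\<lambda>\<omega>. l\<^sup>2 * indicator ?A \<omega>)"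
      using assms by (intro integrable_bounded_rv bounded_rv_intros) measurable
    show "integrable M (\<lambda>\<omega>. (psum k \<omega> - psum m \<omega>)\<^sup>2 * indicator ?A \<omega>)"
      using assms by (intro integrable_psum_sq bounded_rv_intros) measurable
    show "l\<^sup>2 * indicator ?A \<omega> \<le> (psum k \<omega> - psum m \<omega>)\<^sup>2 * indicator ?A \<omega>" for \<omega>
    proof (cases "\<omega> \<in> ?A")
      case True
      then have "l \<le> \<bar>psum k \<omega> - psum m \<omega>\<bar>" by (simp add: first_exit_def)
      then have "l\<^sup>2 \<le> (psum k \<omega> - psum m \<omega>)\<^sup>2" using \<open>0 \<le> l\<close> by (metis power2_abs power_mono)
      then show ?thesis using True by simp
    qed simp
  qed
  also have "\<dots> \<le> (\<integral>\<omega>. (psum n \<omega> - psum m \<omega>)\<^sup>2 * indicator ?A \<omega> \<partial>M)"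
    using assms first_exit_in_F[OF \<open>m \<le> k\<close>]
    by (intro integral_psum_sq_mono bounded_rv_intros) auto
  finally show ?thesis .
qed

theorem kolmogorov_maximal_inequality:
  assumes "m \<le> n" "0 \<le> l"
  shows "l\<^sup>2 * prob {\<omega>\<in>space M. \<exists>k\<in>{m..n}. l \<le> \<bar>psum k \<omega> - psum m \<omega>\<bar>} \<le> (\<Sum>k\<in>{m..<n}. (b k)\<^sup>2)"
proof -
  let ?A = "first_exit m l"
  have disjoint: "disjoint_family_on ?A {m..n}"
    using disjoint_family_first_exit by (rule disjoint_family_on_mono[rotated]) auto
  have integrable: "integrable M (\<lambda>\<omega>. (psum n \<omega> - psum m \<omega>)\<^sup>2 * indicator (?A k) \<omega>)" if "k \<in> {m..n}" for k
    using that by (intro integrable_psum_sq bounded_rv_intros) measurable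
  have "l\<^sup>2 * prob {\<omega>\<in>space M. \<exists>k\<in>{m..n}. l \<le> \<bar>psum k \<omega> - psum m \<omega>\<bar>} = (\<Sum>k\<in>{m..n}. l\<^sup>2 * prob (?A k))"
    unfolding exceed_eq_UN_first_exit using disjoint
    by (subst finite_measure_finite_Union) (auto simp: sum_distrib_left)
  also have "\<dots> \<le> (\<Sum>k\<in>{m..n}. (\<integral>\<omega>. (psum n \<omega> - psum m \<omega>)\<^sup>2 * indicator (?A k) \<omega> \<partial>M))"
    using assms by (intro sum_mono first_exit_mass_le) auto
  also have "\<dots> = (\<integral>\<omega>. (\<Sum>k\<in>{m..n}. (psum n \<omega> - psum m \<omega>)\<^sup>2 * indicator (?A k) \<omega>) \<partial>M)"
    using integrable by (rule Bochner_Integration.integral_sum[symmetric])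
  also have "\<dots> \<le> (\<integral>\<omega>. (psum n \<omega> - psum m \<omega>)\<^sup>2 \<partial>M)"
  proof (rule integral_mono)
    show "integrable M (\<lambda>\<omega>. \<Sum>k\<in>{m..n}. (psum n \<omega> - psum m \<omega>)\<^sup>2 * indicator (?A k) \<omega>)"
      using integrable by (rule Bochner_Integration.integrable_sum)
    show "integrable M (\<lambda>\<omega>. (psum n \<omega> - psum m \<omega>)\<^sup>2)"
      using integrable_psum_sq[of "\<lambda>_. 1"] bounded_rv_const by simp
    fix \<omega>
    have "(\<Sum>k\<in>{m..n}. indicator (?A k) \<omega>) = (indicator (\<Union>(?A ` {m..n})) \<omega> :: real)"
      by (rule indicator_UN_disjoint[symmetric]) (use disjoint in auto)
    then show "(\<Sum>k\<in>{m..n}. (psum n \<omega> - psum m \<omega>)\<^sup>2 * indicator (?A k) \<omega>) \<le> (psum n \<omega> - psum m \<omega>)\<^sup>2"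
      unfolding sum_distrib_left[symmetric] by (simp add: indicator_def)
  qed
  also have "\<dots> \<le> (\<Sum>k\<in>{m..<n}. (b k)\<^sup>2)"
    by (rule integral_psum_increment_sq_le[OF \<open>m \<le> n\<close>])
  finally show ?thesis .
qed

lemma kolmogorov_maximal_inequality_tail:
  assumes "summable (\<lambda>k. (b k)\<^sup>2)" "0 \<le> l"
  shows "l\<^sup>2 * prob {\<omega>\<in>space M. \<exists>k\<ge>m. l \<le> \<bar>psum k \<omega> - psum m \<omega>\<bar>} \<le> (\<Sum>j. (b (j + m))\<^sup>2)"
proof -
  define B where "B n = {\<omega>\<in>space M. \<exists>k\<in>{m..m + n}. l \<le> \<bar>psum k \<omega> - psum m \<omega>\<bar>}" for n
  have B_sets: "B n \<in> sets M" for n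
    unfolding B_def by (rule sets.sets_Collect_finite_Ex) auto
  have "(\<Union>n. B n) = {\<omega>\<in>space M. \<exists>k\<ge>m. l \<le> \<bar>psum k \<omega> - psum m \<omega>\<bar>}"
  proof (intro equalityI subsetI)
    fix \<omega> assume "\<omega> \<in> {\<omega>\<in>space M. \<exists>k\<ge>m. l \<le> \<bar>psum k \<omega> - psum m \<omega>\<bar>}"
    then obtain k where "\<omega> \<in> space M" "k \<ge> m" "l \<le> \<bar>psum k \<omega> - psum m \<omega>\<bar>" by auto
    then show "\<omega> \<in> (\<Union>n. B n)" unfolding B_def by (intro UN_I[of "k - m"]) auto
  qed (auto simp: B_def)
  moreover have "(\<lambda>n. l\<^sup>2 * prob (B n)) \<longlonglongrightarrow> l\<^sup>2 * prob (\<Union>n. B n)"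
    using B_sets by (intro tendsto_mult_left finite_Lim_measure_incseq) (auto simp: incseq_def B_def)
  moreover have "l\<^sup>2 * prob (B n) \<le> (\<Sum>j. (b (j + m))\<^sup>2)" for n
  proof -
    have "l\<^sup>2 * prob (B n) \<le> (\<Sum>k\<in>{m..<m + n}. (b k)\<^sup>2)"
      unfolding B_def using \<open>0 \<le> l\<close> by (intro kolmogorov_maximal_inequality) auto
    also have "\<dots> = (\<Sum>j<n. (b (j + m))\<^sup>2)"
      using sum.shift_bounds_nat_ivl[of "\<lambda>k. (b k)\<^sup>2" 0 m n] by (simp add: atLeast0LessThan add.commute)
    also have "\<dots> \<le> (\<Sum>j. (b (j + m))\<^sup>2)"
      using summable_iff_shift[of "\<lambda>k. (b k)\<^sup>2" m] assms(1) by (intro sum_le_suminf) auto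
    finally show ?thesis .
  qed
  ultimately show ?thesis
    by (metis (no_types, lifting) LIMSEQ_le_const2)
qed

theorem AE_convergent_psum:
  assumes "summable (\<lambda>k. (b k)\<^sup>2)"
  shows "AE \<omega> in M. convergent (\<lambda>n. psum n \<omega>)"
proof -
  define tail where "tail m = (\<Sum>j. (b (j + m))\<^sup>2)" for m
  have "(\<lambda>m. (\<Sum>j. (b j)\<^sup>2) - (\<Sum>j<m. (b j)\<^sup>2)) \<longlonglongrightarrow> (\<Sum>j. (b j)\<^sup>2) - (\<Sum>j. (b j)\<^sup>2)"
    by (intro tendsto_intros summable_LIMSEQ assms)
  then have tail_lim: "tail \<longlonglongrightarrow> 0"
    by (simp add: tail_def[abs_def] suminf_minus_initial_segment[OF assms])
  have "AE \<omega> in M. \<exists>m. \<forall>k\<ge>m. \<bar>psum k \<omega> - psum m \<omega>\<bar> < 1 / Suc j" for j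
  proof -
    define l :: real where "l = 1 / Suc j"
    have "l > 0" by (simp add: l_def)
    define N where "N = {\<omega>\<in>space M. \<forall>m. \<exists>k\<ge>m. l \<le> \<bar>psum k \<omega> - psum m \<omega>\<bar>}"
    have N_sets [measurable]: "N \<in> sets M" unfolding N_def by measurable
    have "prob N \<le> tail m / l\<^sup>2" for m
    proof -
      have "prob N \<le> prob {\<omega>\<in>space M. \<exists>k\<ge>m. l \<le> \<bar>psum k \<omega> - psum m \<omega>\<bar>}"
        unfolding N_def by (intro finite_measure_mono) auto
      then show ?thesis
        using kolmogorov_maximal_inequality_tail[OF assms, of l m] by (simp add: l_def tail_def field_simps)
    qed
    moreover have "(\<lambda>m. tail m / l\<^sup>2) \<longlonglongrightarrow> 0 / l\<^sup>2"
      using tail_lim \<open>l > 0\<close> by (intro tendsto_intros) auto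
    ultimately have "prob N \<le> 0" by (intro LIMSEQ_le_const[of "\<lambda>m. tail m / l\<^sup>2"]) auto
    then have "emeasure M N = 0" by (simp add: emeasure_eq_measure antisym)
    then show ?thesis
      by (intro AE_iff_measurable[THEN iffD2, OF N_sets]) (auto simp: N_def l_def not_less)
  qed
  then have "AE \<omega> in M. \<forall>j. \<exists>m. \<forall>k\<ge>m. \<bar>psum k \<omega> - psum m \<omega>\<bar> < 1 / Suc j"
    by (simp add: AE_all_countable)
  then show ?thesis
    by (rule AE_mp[OF _ AE_I2]) (auto intro: convergent_if_close_to_some_index)
qed

end

section \<open>Conditional expectation residuals\<close>

lemma (in sigma_finite_subalgebra) integral_real_cond_exp_residual_mult_eq_0:
  assumes "integrable M (\<lambda>x. Y x * f x)" "Y \<in> borel_measurable F" "f \<in> borel_measurable M"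
  shows "(\<integral>x. (f x - real_cond_exp M F f x) * Y x \<partial>M) = 0"
proof -
  note cond_exp = real_cond_exp_intg[OF assms]
  have "(\<integral>x. (f x - real_cond_exp M F f x) * Y x \<partial>M)
      = (\<integral>x. Y x * f x - Y x * real_cond_exp M F f x \<partial>M)"
    by (simp add: algebra_simps)
  also have "\<dots> = (\<integral>x. Y x * f x \<partial>M) - (\<integral>x. Y x * real_cond_exp M F f x \<partial>M)"
    using assms(1) cond_exp(1) by (rule Bochner_Integration.integral_diff)
  finally show ?thesis using cond_exp(2) by simp
qed

lemma (in sigma_finite_subalgebra) AE_abs_real_cond_exp_le:
  assumes "integrable M f" "AE x in M. \<bar>f x\<bar> \<le> B"
  shows "AE x in M. \<bar>real_cond_exp M F f x\<bar> \<le> B"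
proof -
  have "AE x in M. real_cond_exp M F f x \<le> B"
    using assms by (intro real_cond_exp_le_c) auto
  moreover have "AE x in M. real_cond_exp M F f x \<ge> -B"
    using assms by (intro real_cond_exp_ge_c) auto
  ultimately show ?thesis by eventually_elim auto
qed

context prob_space
begin

context
  fixes F :: "nat \<Rightarrow> 'a measure" and f :: "nat \<Rightarrow> 'a \<Rightarrow> real" and B :: real
  assumes subalgebra_F: "\<And>k. subalgebra M (F k)"
    and filtration: "\<And>k. sets (F k) \<subseteq> sets (F (Suc k))"
    and f_measurable: "\<And>k. f k \<in> borel_measurable (F (Suc k))"
    and f_bounded: "\<And>k. AE \<omega> in M. \<bar>f k \<omega>\<bar> \<le> B"
begin

lemma sigma_finite_subalgebra_filtration: "sigma_finite_subalgebra M (F k)"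
  by (rule finite_measure_subalgebra_is_sigma_finite) (unfold_locales, rule subalgebra_F)

lemma borel_measurable_adapted_seq [measurable]: "f k \<in> borel_measurable M"
  by (rule measurable_from_subalg[OF subalgebra_F f_measurable])

lemma integrable_adapted_seq: "integrable M (f k)"
  using f_bounded[of k] by (intro integrable_const_bound[where B = B]) auto

lemma measurable_cond_exp_residual:
  "(\<lambda>\<omega>. f k \<omega> - real_cond_exp M (F k) (f k) \<omega>) \<in> borel_measurable (F (Suc k))"
proof -
  have "subalgebra (F (Suc k)) (F k)"
    using filtration[of k] subalgebra_F[of k] subalgebra_F[of "Suc k"] by (simp add: subalgebra_def)
  then have "real_cond_exp M (F k) (f k) \<in> borel_measurable (F (Suc k))"
    by (rule measurable_from_subalg[OF _ borel_measurable_cond_exp])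
  then show ?thesis using f_measurable[of k] by measurable
qed

lemma AE_abs_cond_exp_residual_le: "AE \<omega> in M. \<bar>f k \<omega> - real_cond_exp M (F k) (f k) \<omega>\<bar> \<le> 2 * B"
  using f_bounded[of k]
    sigma_finite_subalgebra.AE_abs_real_cond_exp_le[OF sigma_finite_subalgebra_filtration[of k]
      integrable_adapted_seq[of k] f_bounded[of k]]
  by eventually_elim auto

lemma integral_cond_exp_residual_mult_eq_0:
  assumes Y: "Y \<in> borel_measurable (F k)" and Y_bounded: "\<And>\<omega>. \<omega> \<in> space M \<Longrightarrow> \<bar>Y \<omega>\<bar> \<le> K"
  shows "(\<integral>\<omega>. (f k \<omega> - real_cond_exp M (F k) (f k) \<omega>) * Y \<omega> \<partial>M) = 0"
proof -
  have [measurable]: "Y \<in> borel_measurable M" by (rule measurable_from_subalg[OF subalgebra_F Y])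
  have "AE \<omega> in M. norm (Y \<omega> * f k \<omega>) \<le> K * B"
    using f_bounded[of k] AE_space
  proof eventually_elim
    case (elim \<omega>)
    then show ?case using Y_bounded[of \<omega>] by (simp add: abs_mult mult_mono')
  qed
  then have "integrable M (\<lambda>\<omega>. Y \<omega> * f k \<omega>)"
    by (rule integrable_const_bound) measurable
  then show ?thesis
    by (rule sigma_finite_subalgebra.integral_real_cond_exp_residual_mult_eq_0[OF sigma_finite_subalgebra_filtration _ Y])
      simp
qed

text \<open>The residuals are clipped at their almost sure bound \<open>2 * B\<close>: this changes them only
  on a null set but makes them bounded everywhere, as \<open>martingale_differences\<close> requires.\<close>
theorem AE_convergent_sum_cond_exp_residual:
  assumes "summable (\<lambda>k. (\<gamma> k)\<^sup>2)"
  shows "AE \<omega> in M. convergent (\<lambda>n. \<Sum>k<n. \<gamma> k * (f k \<omega> - real_cond_exp M (F k) (f k) \<omega>))"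
proof -
  define w where "w k \<omega> = f k \<omega> - real_cond_exp M (F k) (f k) \<omega>" for k \<omega>
  define X where "X k \<omega> = \<gamma> k * max (- (2 * B)) (min (2 * B) (w k \<omega>))" for k \<omega>
  have X_eq: "AE \<omega> in M. X k \<omega> = \<gamma> k * w k \<omega>" for k
    using AE_abs_cond_exp_residual_le[of k] by (rule eventually_mono) (auto simp: X_def w_def)
  have X_measurable: "X k \<in> borel_measurable (F (Suc k))" for k
    using measurable_cond_exp_residual[of k] unfolding X_def[abs_def] w_def[abs_def] by measurable
  have [measurable]: "w k \<in> borel_measurable M" "X k \<in> borel_measurable M" for k
    using measurable_from_subalg[OF subalgebra_F] measurable_cond_exp_residual X_measurable
    unfolding w_def[abs_def] by blast+
  interpret martingale_differences M F X "\<lambda>k. \<bar>\<gamma> k\<bar> * \<bar>2 * B\<bar>"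
  proof
    show "\<bar>X k \<omega>\<bar> \<le> \<bar>\<gamma> k\<bar> * \<bar>2 * B\<bar>" for k \<omega>
      unfolding X_def abs_mult by (intro mult_left_mono) (auto simp: max_def min_def abs_if)
    show "(\<integral>\<omega>. X k \<omega> * Y \<omega> \<partial>M) = 0"
      if "Y \<in> borel_measurable (F k)" "\<And>\<omega>. \<omega> \<in> space M \<Longrightarrow> \<bar>Y \<omega>\<bar> \<le> K" for k Y K
    proof -
      have [measurable]: "Y \<in> borel_measurable M" by (rule measurable_from_subalg[OF subalgebra_F that(1)])
      have "AE \<omega> in M. X k \<omega> * Y \<omega> = \<gamma> k * (w k \<omega> * Y \<omega>)"
        using X_eq[of k] by eventually_elim simp
      then have "(\<integral>\<omega>. X k \<omega> * Y \<omega> \<partial>M) = (\<integral>\<omega>. \<gamma> k * (w k \<omega> * Y \<omega>) \<partial>M)"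
        by (intro integral_cong_AE) measurable
      then show ?thesis
        using integral_cond_exp_residual_mult_eq_0[OF that] by (simp add: w_def)
    qed
  qed (use subalgebra_F filtration X_measurable in auto)
  have "AE \<omega> in M. convergent (\<lambda>n. psum n \<omega>)"
    using assms by (intro AE_convergent_psum) (simp add: power_mult_distrib summable_mult2)
  moreover have "AE \<omega> in M. \<forall>k. X k \<omega> = \<gamma> k * w k \<omega>"
    using X_eq by (simp add: AE_all_countable)
  ultimately show ?thesis
    by eventually_elim (simp add: psum_def w_def)
qed

end

end

theorem theorem2:
  fixes P :: "'a::finite \<Rightarrow> 's::finite \<Rightarrow> 's \<Rightarrow> real"
    and g :: "'s \<Rightarrow> 'a \<Rightarrow> real"
    and \<alpha> :: real
    and \<phi> :: "'s \<Rightarrow> real ^ 'd"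
    and H :: nat
    and \<theta>0 :: "real ^ 'd"
    and \<gamma> :: "nat \<Rightarrow> real"
    and M :: "'w measure"
    and F :: "nat \<Rightarrow> 'w measure"
    and \<theta> :: "nat \<Rightarrow> 'w \<Rightarrow> real ^ 'd"
    and \<mu> :: "nat \<Rightarrow> 'w \<Rightarrow> ('s \<Rightarrow> 'a)"
    and \<theta>hat :: "nat \<Rightarrow> 'w \<Rightarrow> real ^ 'd"
    and \<delta> \<kappa> :: real
  assumes P_nonneg: "\<And>u i j. P u i j \<ge> 0"
    and P_stoch: "\<And>u i. (\<Sum>j\<in>UNIV. P u i j) = 1"
    and g_bounds: "\<And>i u. 0 \<le> g i u \<and> g i u \<le> 1"
    and alpha: "0 < \<alpha>" "\<alpha> < 1"
    and H: "H \<ge> 1"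
    and step_pos: "\<And>k. 0 < \<gamma> k \<and> \<gamma> k \<le> 1"
    and step_div: "\<not> summable \<gamma>"
    and step_sq: "summable (\<lambda>k. (\<gamma> k)\<^sup>2)"
    and prob: "prob_space M"
    and filt_sub: "\<And>k. subalgebra M (F k)"
    and filt_mono: "\<And>k. sets (F k) \<subseteq> sets (F (Suc k))"
    and theta_init: "\<And>\<omega>. \<theta> 0 \<omega> = \<theta>0"
    and greedy: "\<And>k \<omega>. Tmu P g \<alpha> (\<mu> (Suc k) \<omega>) ((Tbell P g \<alpha> ^^ (H - 1)) (featmul \<phi> (\<theta> k \<omega>)))
                       = (Tbell P g \<alpha> ^^ H) (featmul \<phi> (\<theta> k \<omega>))"
    and theta_step: "\<And>k \<omega>. \<theta> (Suc k) \<omega> = (1 - \<gamma> k) *\<^sub>R \<theta> k \<omega> + \<gamma> k *\<^sub>R \<theta>hat k \<omega>"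
    and theta_meas: "\<And>k. \<theta> k \<in> borel_measurable (F k)"
    and mu_meas: "\<And>k. \<mu> (Suc k) \<in> measurable (F k) (count_space UNIV)"
    and thetahat_meas: "\<And>k. \<theta>hat k \<in> borel_measurable (F (Suc k))"
    and thetahat_bdd: "\<exists>B. \<forall>k. AE \<omega> in M. norm_inf (featmul \<phi> (\<theta>hat k \<omega>)) \<le> B"
    and delta_pos: "\<delta> > 0"
    and kappa_pos: "\<kappa> > 0"
    and beta_lt1: "\<alpha> ^ (H - 1) + \<kappa> * (2 * \<alpha> ^ (H - 1) / (1 - \<alpha>)) < 1"
    and bias: "\<And>k. AE \<omega> in M.
         norm_inf (\<lambda>i. real_cond_exp M (F k) (\<lambda>\<omega>'. featmul \<phi> (\<theta>hat k \<omega>') i) \<omega>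
                       - (Tbell P g \<alpha> ^^ (H - 1)) (featmul \<phi> (\<theta> k \<omega>)) i)
         \<le> \<kappa> * norm_inf (\<lambda>i. (Tbell P g \<alpha> ^^ (H - 1)) (featmul \<phi> (\<theta> k \<omega>)) i
                               - Jpol P g \<alpha> (\<mu> (Suc k) \<omega>) i) + \<delta>"
  shows "AE \<omega> in M.
      limsup (\<lambda>k. ereal (norm_inf (\<lambda>i. featmul \<phi> (\<theta> k \<omega>) i - Jstar P g \<alpha> i)))
        \<le> ereal (\<delta> / (1 - (\<alpha> ^ (H - 1) + \<kappa> * (2 * \<alpha> ^ (H - 1) / (1 - \<alpha>)))))
    \<and> limsup (\<lambda>k. ereal (norm_inf (\<lambda>i. Jpol P g \<alpha> (\<mu> k \<omega>) i - Jstar P g \<alpha> i)))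
        \<le> ereal (2 * \<alpha> ^ (H - 1) / (1 - \<alpha>)
                 * (\<delta> / (1 - (\<alpha> ^ (H - 1) + \<kappa> * (2 * \<alpha> ^ (H - 1) / (1 - \<alpha>))))))"
proof -
  interpret prob_space M by (rule prob)
  interpret discounted_mdp P g \<alpha> using P_nonneg P_stoch alpha by unfold_locales auto
  obtain B where B: "\<And>k. AE \<omega> in M. norm_inf (featmul \<phi> (\<theta>hat k \<omega>)) \<le> B"
    using thetahat_bdd by blast
  have noise_bounded: "AE \<omega> in M. \<bar>featmul \<phi> (\<theta>hat k \<omega>) i\<bar> \<le> B" for k i
    using B[of k] by (rule eventually_mono) (rule order_trans[OF abs_le_norm_inf])
  have noise_measurable: "(\<lambda>\<omega>. featmul \<phi> (\<theta>hat k \<omega>) i) \<in> borel_measurable (F (Suc k))" for k i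
    using thetahat_meas[of k] unfolding featmul_def by measurable
  have "AE \<omega> in M. \<forall>i. convergent (\<lambda>n. \<Sum>k<n. \<gamma> k * (featmul \<phi> (\<theta>hat k \<omega>) i
      - real_cond_exp M (F k) (\<lambda>\<omega>. featmul \<phi> (\<theta>hat k \<omega>) i) \<omega>))"
    unfolding AE_all_countable
    by (intro allI AE_convergent_sum_cond_exp_residual[of F, OF filt_sub filt_mono noise_measurable noise_bounded step_sq])
  moreover have "AE \<omega> in M. \<forall>k. norm_inf (\<lambda>i. real_cond_exp M (F k) (\<lambda>\<omega>'. featmul \<phi> (\<theta>hat k \<omega>') i) \<omega>
        - (Tb ^^ (H - 1)) (featmul \<phi> (\<theta> k \<omega>)) i)
      \<le> \<kappa> * norm_inf (\<lambda>i. (Tb ^^ (H - 1)) (featmul \<phi> (\<theta> k \<omega>)) i - Jpol P g \<alpha> (\<mu> (Suc k) \<omega>) i) + \<delta>"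
    using bias by (simp add: AE_all_countable)
  ultimately show ?thesis
  proof eventually_elim
    case (elim \<omega>)
    have "featmul \<phi> (\<theta> (Suc k) \<omega>) i
        = (1 - \<gamma> k) * featmul \<phi> (\<theta> k \<omega>) i + \<gamma> k * featmul \<phi> (\<theta>hat k \<omega>) i" for k i
      by (simp add: featmul_def theta_step inner_add_right)
    then show ?case
      using lookahead_averaging_limsup[OF _ greedy elim(2)[rule_format] elim(1)[rule_format]
          conjunct1[OF step_pos] conjunct2[OF step_pos] step_div H less_imp_le[OF kappa_pos] beta_lt1]
      by blast
  qed
qed

end
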